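(* Let $n\ge 3$ be odd and $k\ge 3$. Then every Jenga-like configuration $Q$ of the $(n,k)$-game satisfies $$ g(Q)\le \frac{n(n-1)(k-2)}{2}. $$
   Context: The $(n,k)$-game is played with $nk$ blocks, each a box of length $n$, width $1$, height $1$. Level $i$ occupies heights $[i-1,i]$ and has $n$ slots $j=1,\dots,n$; a block in slot $j$ of an odd level $i$ is $[0,n]\times[j-1,j]\times[i-1,i]$, and of an even level $i$ is $[j-1,j]\times[0,n]\times[i-1,i]$. The initial configuration has $k$ full levels. A move removes exactly one block from a level which is not the topmost level and, when the topmost level is incomplete (fewer than $n$ blocks), is not the level immediately below the topmost level, and places it in an empty slot of the topmost level if that level is incomplete, or in a slot of a new level on top otherwise. A Jenga-like configuration is one obtainable from the initial configuration by finitely many moves in which every level up to the topmost contains at least one block. $g(Q)$ is the genus of the boundary surface of the union of the blocks of $Q$ (a connected closed polyhedral surface). *)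

theory Defs
  imports Complex_Main
begin

type_synonym config = "nat set list"
  (* level i (1-based) is element i-1 of the list; a level is the set of occupied slots, a subset of {1..n} *)

definition initial_config :: "nat \<Rightarrow> nat \<Rightarrow> config" where
  "initial_config n k = replicate k {1..n}"

definition jenga_move :: "nat \<Rightarrow> config \<Rightarrow> config \<Rightarrow> bool" where
  "jenga_move n Q Q' \<longleftrightarrow>
     (\<exists>i j. i + 1 < length Q
        \<and> (card (last Q) < n \<longrightarrow> i + 2 \<noteq> length Q)
        \<and> j \<in> Q ! i
        \<and> (let R = Q[i := Q ! i - {j}] in
            (if card (last Q) < n
             then (\<exists>s \<in> {1..n} - last Q. Q' = butlast R @ [insert s (last Q)])
             else (\<exists>s \<in> {1..n}. Q' = R @ [{s}]))))"

definition jenga_like :: "nat \<Rightarrow> nat \<Rightarrow> config \<Rightarrow> bool" where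
  "jenga_like n k Q \<longleftrightarrow> (jenga_move n)\<^sup>*\<^sup>* (initial_config n k) Q \<and> (\<forall>L \<in> set Q. L \<noteq> {})"

type_synonym pt = "int \<times> int \<times> int"

(* unit cubes [x,x+1]x[y,y+1]x[z,z+1] indexed by their minimal corner (x,y,z) *)
definition config_cubes :: "nat \<Rightarrow> config \<Rightarrow> pt set" where
  "config_cubes n Q =
     {(int x, int j - 1, int i) | i j x. i < length Q \<and> even i \<and> j \<in> Q ! i \<and> x < n}
   \<union> {(int j - 1, int y, int i) | i j y. i < length Q \<and> odd i \<and> j \<in> Q ! i \<and> y < n}"

fun padd :: "pt \<Rightarrow> pt \<Rightarrow> pt" where
  "padd (a, b, c) (x, y, z) = (a + x, b + y, c + z)"

fun psub :: "pt \<Rightarrow> pt \<Rightarrow> pt" where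
  "psub (a, b, c) (x, y, z) = (a - x, b - y, c - z)"

definition unitv :: "nat \<Rightarrow> pt" where
  "unitv d = (if d = 0 then (1, 0, 0) else if d = 1 then (0, 1, 0) else (0, 0, 1))"

definition ax1 :: "nat \<Rightarrow> nat" where "ax1 d = (d + 1) mod 3"
definition ax2 :: "nat \<Rightarrow> nat" where "ax2 d = (d + 2) mod 3"

(* unit square (d,p): perpendicular to axis d, minimal corner p;
   unit segment (d,p): parallel to axis d, from p to p + e_d *)
definition boundary_faces :: "pt set \<Rightarrow> (nat \<times> pt) set" where
  "boundary_faces C = {(d, p). d < 3 \<and> ((p \<in> C) \<noteq> (psub p (unitv d) \<in> C))}"

definition face_edges :: "nat \<times> pt \<Rightarrow> (nat \<times> pt) set" where
  "face_edges f = (case f of (d, p) \<Rightarrow>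
     {(ax1 d, p), (ax1 d, padd p (unitv (ax2 d))), (ax2 d, p), (ax2 d, padd p (unitv (ax1 d)))})"

definition face_vertices :: "nat \<times> pt \<Rightarrow> pt set" where
  "face_vertices f = (case f of (d, p) \<Rightarrow>
     {p, padd p (unitv (ax1 d)), padd p (unitv (ax2 d)), padd (padd p (unitv (ax1 d))) (unitv (ax2 d))})"

definition boundary_edges :: "pt set \<Rightarrow> (nat \<times> pt) set" where
  "boundary_edges C = (\<Union>f \<in> boundary_faces C. face_edges f)"

definition boundary_vertices :: "pt set \<Rightarrow> pt set" where
  "boundary_vertices C = (\<Union>f \<in> boundary_faces C. face_vertices f)"

definition boundary_euler :: "pt set \<Rightarrow> int" where
  "boundary_euler C = int (card (boundary_vertices C)) - int (card (boundary_edges C))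
                      + int (card (boundary_faces C))"

(* genus of a closed connected orientable surface: chi = 2 - 2g *)
definition genus :: "nat \<Rightarrow> config \<Rightarrow> real" where
  "genus n Q = (2 - real_of_int (boundary_euler (config_cubes n Q))) / 2"

end

theory Submission
  imports Defs
begin

(* The boundary surface is built from unit squares, so its Euler characteristic is the signed
   count of the boundary cells of the cubical structure of Z^3, a cell being on the boundary when
   its star (the unit cubes containing it) meets the solid without being contained in it.
   Summing this count layer by layer, and using that every layer of a configuration is the
   product of a full interval with the set of occupied slots of its level, it factors into
   one-dimensional counts: chi = 2 sum rho_i - 2 sum rho_i rho_(i+1), where rho_i is the number
   of runs of consecutive occupied slots in level i, i.e. g = 1 - sum rho_i + sum rho_i rho_(i+1).
   Along any play the level below the top stays full, so the top three levels contribute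
   nothing and g = sum rho_i (rho_(i+1) - 1) over the lower levels; since rho_i is at most the
   number of blocks of level i and rho_(i+1) <= (n + 1) / 2, the block count n k gives the bound. *)

section \<open>Cells of the cubical complex\<close>

text \<open>A cell of the unit cubical structure of the line is \<open>(True, t)\<close>, the open interval
  \<open>(t, t + 1)\<close>, or \<open>(False, t)\<close>, the point \<open>t\<close>.  Its star is the set of unit intervals
  \<open>[s, s + 1]\<close>, indexed by \<open>s\<close>, whose closure contains it.\<close>

type_synonym cell = "bool \<times> int"
type_synonym cell3 = "cell \<times> cell \<times> cell"

definition star :: "cell \<Rightarrow> int set" where
  "star c = (if fst c then {snd c} else {snd c - 1, snd c})"

definition star3 :: "cell3 \<Rightarrow> pt set" where
  "star3 c = (case c of (a, b, e) \<Rightarrow> star a \<times> star b \<times> star e)"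

definition cell_dim :: "cell3 \<Rightarrow> nat" where
  "cell_dim c = (case c of (a, b, e) \<Rightarrow> of_bool (fst a) + of_bool (fst b) + of_bool (fst e))"

definition cells :: "int \<Rightarrow> int \<Rightarrow> cell set" where
  "cells lo hi = UNIV \<times> {lo..hi}"

definition on_boundary :: "pt set \<Rightarrow> cell3 \<Rightarrow> bool" where
  "on_boundary C c \<longleftrightarrow> star3 c \<inter> C \<noteq> {} \<and> \<not> star3 c \<subseteq> C"

definition face_cell :: "nat \<times> pt \<Rightarrow> cell3" where
  "face_cell f = (case f of (d, x, y, z) \<Rightarrow> ((d \<noteq> 0, x), (d \<noteq> 1, y), (d \<noteq> 2, z)))"

definition edge_cell :: "nat \<times> pt \<Rightarrow> cell3" where
  "edge_cell e = (case e of (d, x, y, z) \<Rightarrow> ((d = 0, x), (d = 1, y), (d = 2, z)))"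

definition vertex_cell :: "pt \<Rightarrow> cell3" where
  "vertex_cell v = (case v of (x, y, z) \<Rightarrow> ((False, x), (False, y), (False, z)))"

lemma ax_simps [simp]:
  "ax1 0 = 1" "ax1 (Suc 0) = 2" "ax1 2 = 0" "ax2 0 = 2" "ax2 (Suc 0) = 0" "ax2 2 = 1"
  by (simp_all add: ax1_def ax2_def)

lemma unitv_simps [simp]: "unitv 0 = (1, 0, 0)" "unitv (Suc 0) = (0, 1, 0)" "unitv 2 = (0, 0, 1)"
  by (simp_all add: unitv_def)

lemma less_3_cases: "d < (3::nat) \<Longrightarrow> d = 0 \<or> d = 1 \<or> d = 2"
  by auto

lemma finite_cells [simp]: "finite (cells lo hi)"
  by (simp add: cells_def)

lemma on_boundary_mono: "star3 c \<subseteq> star3 c' \<Longrightarrow> on_boundary C c \<Longrightarrow> on_boundary C c'"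
  unfolding on_boundary_def by blast

lemma star_in_cells: "s \<in> star c \<Longrightarrow> s \<in> {lo<..<hi} \<Longrightarrow> c \<in> cells lo hi"
  by (cases c) (auto simp: cells_def star_def split: if_splits)

lemma on_boundary_in_cells:
  assumes "C \<subseteq> {lo<..<hi} \<times> {lo<..<hi} \<times> {lo<..<hi}" and "on_boundary C c"
  shows "c \<in> cells lo hi \<times> cells lo hi \<times> cells lo hi"
proof -
  obtain a b e where c: "c = (a, b, e)" by (cases c)
  from assms(2) obtain x y z where "(x, y, z) \<in> star3 c" "(x, y, z) \<in> C"
    unfolding on_boundary_def by auto
  with assms(1) show ?thesis
    unfolding c star3_def by (auto intro: star_in_cells)
qed

lemma boundary_faces_iff: "f \<in> boundary_faces C \<longleftrightarrow> fst f < 3 \<and> on_boundary C (face_cell f)"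
proof -
  obtain d x y z where "f = (d, x, y, z)" by (cases f) auto
  then show ?thesis
    unfolding boundary_faces_def on_boundary_def face_cell_def star3_def star_def
    by (cases "d < 3") (auto dest!: less_3_cases)
qed

lemma boundary_edgesI: "f \<in> boundary_faces C \<Longrightarrow> e \<in> face_edges f \<Longrightarrow> e \<in> boundary_edges C"
  unfolding boundary_edges_def by blast

lemma boundary_verticesI: "f \<in> boundary_faces C \<Longrightarrow> v \<in> face_vertices f \<Longrightarrow> v \<in> boundary_vertices C"
  unfolding boundary_vertices_def by blast

lemma star3_face_subset_edge:
  assumes "fst f < 3" and "e \<in> face_edges f"
  shows "fst e < 3 \<and> star3 (face_cell f) \<subseteq> star3 (edge_cell e)"
proof -
  obtain d x y z where f: "f = (d, x, y, z)" by (cases f) auto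
  from assms(1) consider "d = 0" | "d = 1" | "d = 2" unfolding f by force
  then show ?thesis
    using assms(2) unfolding f
    by cases (auto simp: face_edges_def face_cell_def edge_cell_def star3_def star_def times_subset_iff)
qed

lemma star3_face_subset_vertex:
  assumes "fst f < 3" and "v \<in> face_vertices f"
  shows "star3 (face_cell f) \<subseteq> star3 (vertex_cell v)"
proof -
  obtain d x y z where f: "f = (d, x, y, z)" by (cases f) auto
  from assms(1) consider "d = 0" | "d = 1" | "d = 2" unfolding f by force
  then show ?thesis
    using assms(2) unfolding f
    by cases (auto simp: face_vertices_def face_cell_def vertex_cell_def star3_def star_def times_subset_iff)
qed

text \<open>The four unit cubes around an edge, and the eight around a vertex, are linked by a chain
  of faces; if they are not all in \<open>C\<close> or all outside, one of these faces is a boundary face.\<close>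

lemma edge_on_boundary_in_boundary_edges:
  assumes "d < 3" and "on_boundary C (edge_cell (d, x, y, z))"
  shows "(d, x, y, z) \<in> boundary_edges C"
proof -
  from assms(1) consider "d = 0" | "d = 1" | "d = 2" by linarith
  then show ?thesis
  proof cases
    case 1
    with assms(2) have "(1, x, y, z) \<in> boundary_faces C \<or> (1, x, y, z - 1) \<in> boundary_faces C
        \<or> (2, x, y, z) \<in> boundary_faces C"
      by (auto simp: boundary_faces_def on_boundary_def edge_cell_def star3_def star_def)
    then show ?thesis
      unfolding 1 by (elim disjE) (erule boundary_edgesI, simp add: face_edges_def)+
  next
    case 2
    with assms(2) have "(2, x, y, z) \<in> boundary_faces C \<or> (2, x - 1, y, z) \<in> boundary_faces C
        \<or> (0, x, y, z) \<in> boundary_faces C"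
      by (auto simp: boundary_faces_def on_boundary_def edge_cell_def star3_def star_def)
    then show ?thesis
      unfolding 2 by (elim disjE) (erule boundary_edgesI, simp add: face_edges_def)+
  next
    case 3
    with assms(2) have "(0, x, y, z) \<in> boundary_faces C \<or> (0, x, y - 1, z) \<in> boundary_faces C
        \<or> (1, x, y, z) \<in> boundary_faces C"
      by (auto simp: boundary_faces_def on_boundary_def edge_cell_def star3_def star_def)
    then show ?thesis
      unfolding 3 by (elim disjE) (erule boundary_edgesI, simp add: face_edges_def)+
  qed
qed

lemma vertex_on_boundary_in_boundary_vertices:
  assumes "on_boundary C (vertex_cell (x, y, z))"
  shows "(x, y, z) \<in> boundary_vertices C"
proof -
  from assms have "(0, x, y, z) \<in> boundary_faces C \<or> (1, x - 1, y, z) \<in> boundary_faces C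
      \<or> (0, x, y - 1, z) \<in> boundary_faces C \<or> (2, x, y - 1, z) \<in> boundary_faces C
      \<or> (0, x, y - 1, z - 1) \<in> boundary_faces C \<or> (1, x - 1, y, z - 1) \<in> boundary_faces C
      \<or> (0, x, y, z - 1) \<in> boundary_faces C"
    by (auto simp: boundary_faces_def on_boundary_def vertex_cell_def star3_def star_def)
  then show ?thesis
    by (elim disjE) (erule boundary_verticesI, simp add: face_vertices_def)+
qed

lemma boundary_edges_iff: "e \<in> boundary_edges C \<longleftrightarrow> fst e < 3 \<and> on_boundary C (edge_cell e)"
proof
  assume "e \<in> boundary_edges C"
  then obtain f where "f \<in> boundary_faces C" "e \<in> face_edges f"
    unfolding boundary_edges_def by blast
  then show "fst e < 3 \<and> on_boundary C (edge_cell e)"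
    using star3_face_subset_edge on_boundary_mono unfolding boundary_faces_iff by blast
next
  assume "fst e < 3 \<and> on_boundary C (edge_cell e)"
  then show "e \<in> boundary_edges C"
    using edge_on_boundary_in_boundary_edges by (cases e) auto
qed

lemma boundary_vertices_iff: "v \<in> boundary_vertices C \<longleftrightarrow> on_boundary C (vertex_cell v)"
proof
  assume "v \<in> boundary_vertices C"
  then obtain f where "f \<in> boundary_faces C" "v \<in> face_vertices f"
    unfolding boundary_vertices_def by blast
  then show "on_boundary C (vertex_cell v)"
    using star3_face_subset_vertex on_boundary_mono unfolding boundary_faces_iff by blast
next
  assume "on_boundary C (vertex_cell v)"
  then show "v \<in> boundary_vertices C"
    using vertex_on_boundary_in_boundary_vertices by (cases v) auto
qed

section \<open>The Euler characteristic as a signed count of cells\<close>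

lemma card_filter_image:
  assumes "inj_on g A"
  shows "card {b \<in> g ` A. P b} = card {a \<in> A. P (g a)}"
proof -
  have "{b \<in> g ` A. P b} = g ` {a \<in> A. P (g a)}" by blast
  moreover have "inj_on g {a \<in> A. P (g a)}" using assms by (rule inj_on_subset) blast
  ultimately show ?thesis by (simp add: card_image)
qed

lemma face_cell_bij: "inj_on face_cell {f. fst f < 3}" "face_cell ` {f. fst f < 3} = {c. cell_dim c = 2}"
proof -
  show "inj_on face_cell {f. fst f < 3}"
    by (rule inj_onI) (auto simp: face_cell_def dest!: less_3_cases)
  have "c \<in> face_cell ` {f. fst f < 3}" if "cell_dim c = 2" for c
  proof -
    obtain a x b y e z where c: "c = ((a, x), (b, y), (e, z))" by (cases c) auto
    with that have "c = face_cell (if \<not> a then 0 else if \<not> b then 1 else 2, x, y, z)"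
      by (cases a; cases b; cases e) (auto simp: cell_dim_def face_cell_def)
    then show ?thesis by (auto intro!: image_eqI)
  qed
  then show "face_cell ` {f. fst f < 3} = {c. cell_dim c = 2}"
    by (auto simp: face_cell_def cell_dim_def dest!: less_3_cases)
qed

lemma edge_cell_bij: "inj_on edge_cell {e. fst e < 3}" "edge_cell ` {e. fst e < 3} = {c. cell_dim c = 1}"
proof -
  show "inj_on edge_cell {e. fst e < 3}"
    by (rule inj_onI) (auto simp: edge_cell_def dest!: less_3_cases)
  have "c \<in> edge_cell ` {e. fst e < 3}" if "cell_dim c = 1" for c
  proof -
    obtain a x b y e z where c: "c = ((a, x), (b, y), (e, z))" by (cases c) auto
    with that have "c = edge_cell (if a then 0 else if b then 1 else 2, x, y, z)"
      by (cases a; cases b; cases e) (auto simp: cell_dim_def edge_cell_def)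
    then show ?thesis by (auto intro!: image_eqI)
  qed
  then show "edge_cell ` {e. fst e < 3} = {c. cell_dim c = 1}"
    by (auto simp: edge_cell_def cell_dim_def dest!: less_3_cases)
qed

lemma vertex_cell_bij: "inj vertex_cell" "range vertex_cell = {c. cell_dim c = 0}"
proof -
  show "inj vertex_cell"
    by (rule injI) (auto simp: vertex_cell_def split: prod.splits)
  have "c \<in> range vertex_cell" if "cell_dim c = 0" for c
  proof -
    obtain a x b y e z where c: "c = ((a, x), (b, y), (e, z))" by (cases c) auto
    with that have "c = vertex_cell (x, y, z)"
      by (cases a; cases b; cases e) (auto simp: cell_dim_def vertex_cell_def)
    then show ?thesis by blast
  qed
  then show "range vertex_cell = {c. cell_dim c = 0}"
    by (auto simp: vertex_cell_def cell_dim_def)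
qed

lemma card_boundary_faces: "card (boundary_faces C) = card {c. cell_dim c = 2 \<and> on_boundary C c}"
proof -
  have "boundary_faces C = {f \<in> {f. fst f < 3}. on_boundary C (face_cell f)}"
    using boundary_faces_iff by blast
  then show ?thesis
    using card_filter_image[OF face_cell_bij(1)] face_cell_bij(2) by simp
qed

lemma card_boundary_edges: "card (boundary_edges C) = card {c. cell_dim c = 1 \<and> on_boundary C c}"
proof -
  have "boundary_edges C = {e \<in> {e. fst e < 3}. on_boundary C (edge_cell e)}"
    using boundary_edges_iff by blast
  then show ?thesis
    using card_filter_image[OF edge_cell_bij(1)] edge_cell_bij(2) by simp
qed

lemma card_boundary_vertices: "card (boundary_vertices C) = card {c. cell_dim c = 0 \<and> on_boundary C c}"
proof -
  have "boundary_vertices C = {v \<in> UNIV. on_boundary C (vertex_cell v)}"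
    using boundary_vertices_iff by blast
  then show ?thesis
    using card_filter_image[OF vertex_cell_bij(1)] vertex_cell_bij(2) by simp
qed

text \<open>The star of a cube is the cube itself, so cubes contribute nothing to the sum below.\<close>

lemma signed_cell_contribution:
  "(-1) ^ cell_dim c * (of_bool (star3 c \<inter> C \<noteq> {}) - of_bool (star3 c \<subseteq> C))
   = of_bool (cell_dim c = 0 \<and> on_boundary C c) - of_bool (cell_dim c = 1 \<and> on_boundary C c)
     + (of_bool (cell_dim c = 2 \<and> on_boundary C c) :: int)"
proof -
  obtain a x b y e z where c: "c = ((a, x), (b, y), (e, z))" by (cases c) auto
  show ?thesis
  proof (cases "a \<and> b \<and> e")
    case True
    then have "star3 c = {(x, y, z)}" by (simp add: c star3_def star_def)
    with True show ?thesis by (simp add: c cell_dim_def on_boundary_def)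
  next
    case False
    have "star3 c \<noteq> {}" by (simp add: c star3_def star_def)
    then have "star3 c \<subseteq> C \<Longrightarrow> star3 c \<inter> C \<noteq> {}" by blast
    with False show ?thesis
      unfolding on_boundary_def by (cases a; cases b; cases e) (auto simp: c cell_dim_def)
  qed
qed

lemma boundary_euler_signed_sum:
  assumes "C \<subseteq> {lo<..<hi} \<times> {lo<..<hi} \<times> {lo<..<hi}"
  shows "boundary_euler C = (\<Sum>c \<in> cells lo hi \<times> cells lo hi \<times> cells lo hi.
           (-1) ^ cell_dim c * (of_bool (star3 c \<inter> C \<noteq> {}) - of_bool (star3 c \<subseteq> C)))"
proof -
  let ?B = "cells lo hi \<times> cells lo hi \<times> cells lo hi"
  have count: "(\<Sum>c \<in> ?B. of_bool (cell_dim c = d \<and> on_boundary C c))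
      = int (card {c. cell_dim c = d \<and> on_boundary C c})" for d
  proof -
    have "?B \<inter> {c. cell_dim c = d \<and> on_boundary C c} = {c. cell_dim c = d \<and> on_boundary C c}"
      using on_boundary_in_cells[OF assms] by blast
    then show ?thesis by simp
  qed
  show ?thesis
    unfolding signed_cell_contribution sum.distrib sum_subtractf count boundary_euler_def
      card_boundary_faces card_boundary_edges card_boundary_vertices ..
qed

section \<open>Runs of a set of integers\<close>

definition runs :: "int set \<Rightarrow> nat" where
  "runs S = card {t \<in> S. t - 1 \<notin> S}"

lemma runs_empty [simp]: "runs {} = 0"
  by (simp add: runs_def)

lemma runs_atLeastLessThan: "0 < n \<Longrightarrow> runs {0..<int n} = 1"
proof -
  assume "0 < n"
  then have "{t \<in> {0..<int n}. t - 1 \<notin> {0..<int n}} = {0}" by auto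
  then show ?thesis by (simp add: runs_def)
qed

lemma runs_le_card: "finite S \<Longrightarrow> runs S \<le> card S"
  unfolding runs_def by (rule card_mono) auto

lemma card_interior_points:
  assumes "finite S"
  shows "card {t. t - 1 \<in> S \<and> t \<in> S} + runs S = card S"
proof -
  have "S = {t. t - 1 \<in> S \<and> t \<in> S} \<union> {t \<in> S. t - 1 \<notin> S}" by blast
  moreover have "card ({t. t - 1 \<in> S \<and> t \<in> S} \<union> {t \<in> S. t - 1 \<notin> S})
      = card {t. t - 1 \<in> S \<and> t \<in> S} + card {t \<in> S. t - 1 \<notin> S}"
    by (rule card_Un_disjoint) (use assms in auto)
  ultimately show ?thesis by (simp add: runs_def)
qed

lemma card_closure_points:
  assumes "finite S"
  shows "card {t. t - 1 \<in> S \<or> t \<in> S} = card S + runs S"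
proof -
  let ?T = "(\<lambda>s. s + 1) ` S"
  have "{t. t - 1 \<in> S \<or> t \<in> S} = S \<union> ?T" by force
  moreover have "S \<inter> ?T = {t. t - 1 \<in> S \<and> t \<in> S}" by force
  moreover have "card ?T = card S" by (rule card_image) (simp add: inj_on_def)
  ultimately show ?thesis
    using card_Un_Int[of S ?T] card_interior_points[OF assms] assms by simp
qed

text \<open>Every run that does not start at \<open>0\<close> is preceded by an unoccupied slot.\<close>

lemma runs_bound:
  assumes "S \<subseteq> {0..<int n}"
  shows "2 * runs S \<le> n + 1"
proof -
  let ?St = "{t \<in> S. t - 1 \<notin> S}"
  have fin: "finite S" using assms finite_subset by blast
  have "card (?St - {0}) = card ((\<lambda>t. t - 1) ` (?St - {0}))"
    by (rule card_image[symmetric]) (simp add: inj_on_def)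
  also have "\<dots> \<le> card ({0..<int n} - S)"
    by (rule card_mono) (use assms in auto)
  also have "\<dots> = n - card S"
    using card_Diff_subset[OF fin assms] by simp
  finally have "card (?St - {0}) \<le> n - card S" .
  moreover have "card ?St \<le> card (?St - {0}) + 1"
    by (cases "0 \<in> ?St") (simp_all add: card_Diff_singleton_if fin)
  moreover have "card S \<le> n" using card_mono[OF _ assms] by simp
  ultimately show ?thesis using runs_le_card[OF fin] unfolding runs_def by linarith
qed

section \<open>The Euler characteristic layer by layer\<close>

definition cell_sign :: "cell \<Rightarrow> int" where
  "cell_sign c = (if fst c then -1 else 1)"

definition signed_count :: "int \<Rightarrow> int \<Rightarrow> (cell \<Rightarrow> bool) \<Rightarrow> int" where
  "signed_count lo hi P = (\<Sum>c \<in> cells lo hi. cell_sign c * of_bool (P c))"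

definition signed_count2 :: "int \<Rightarrow> int \<Rightarrow> (cell \<Rightarrow> cell \<Rightarrow> bool) \<Rightarrow> int" where
  "signed_count2 lo hi P =
     (\<Sum>cx \<in> cells lo hi. \<Sum>cy \<in> cells lo hi. cell_sign cx * cell_sign cy * of_bool (P cx cy))"

definition slice :: "pt set \<Rightarrow> int \<Rightarrow> (int \<times> int) set" where
  "slice C t = {(x, y). (x, y, t) \<in> C}"

lemma sum_cells: "(\<Sum>c \<in> cells lo hi. f c) = (\<Sum>t \<in> {lo..hi}. f (True, t)) + (\<Sum>t \<in> {lo..hi}. f (False, t))"
proof -
  have "(\<Sum>c \<in> cells lo hi. f c) = (\<Sum>b \<in> UNIV. \<Sum>t \<in> {lo..hi}. f (b, t))"
    unfolding cells_def by (simp add: sum.cartesian_product)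
  then show ?thesis by (simp add: UNIV_bool add.commute)
qed

lemma signed_count_meets:
  assumes "S \<subseteq> {lo<..<hi}"
  shows "signed_count lo hi (\<lambda>c. star c \<inter> S \<noteq> {}) = int (runs S)"
proof -
  have fin: "finite S" using assms finite_subset by blast
  have "signed_count lo hi (\<lambda>c. star c \<inter> S \<noteq> {})
      = (\<Sum>t \<in> {lo..hi}. of_bool (t - 1 \<in> S \<or> t \<in> S)) - (\<Sum>t \<in> {lo..hi}. of_bool (t \<in> S))"
    by (simp add: signed_count_def sum_cells cell_sign_def star_def sum_negf)
  also have "\<dots> = int (card ({lo..hi} \<inter> {t. t - 1 \<in> S \<or> t \<in> S})) - int (card ({lo..hi} \<inter> {t. t \<in> S}))"
    by (simp only: sum_of_bool_eq finite_atLeastAtMost_int)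
  also have "{lo..hi} \<inter> {t. t - 1 \<in> S \<or> t \<in> S} = {t. t - 1 \<in> S \<or> t \<in> S}" using assms by force
  also have "{lo..hi} \<inter> {t. t \<in> S} = S" using assms by force
  finally show ?thesis using card_closure_points[OF fin] by simp
qed

lemma signed_count_inside:
  assumes "S \<subseteq> {lo<..<hi}"
  shows "signed_count lo hi (\<lambda>c. star c \<subseteq> S) = - int (runs S)"
proof -
  have fin: "finite S" using assms finite_subset by blast
  have "signed_count lo hi (\<lambda>c. star c \<subseteq> S)
      = int (card ({lo..hi} \<inter> {t. t - 1 \<in> S \<and> t \<in> S})) - int (card ({lo..hi} \<inter> {t. t \<in> S}))"
    by (simp add: signed_count_def sum_cells cell_sign_def star_def sum_negf)
  also have "{lo..hi} \<inter> {t. t - 1 \<in> S \<and> t \<in> S} = {t. t - 1 \<in> S \<and> t \<in> S}" using assms by force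
  also have "{lo..hi} \<inter> {t. t \<in> S} = S" using assms by force
  finally show ?thesis using card_interior_points[OF fin] by linarith
qed

lemma signed_count2_times:
  "signed_count2 lo hi (\<lambda>cx cy. P cx \<and> Q cy) = signed_count lo hi P * signed_count lo hi Q"
  unfolding signed_count2_def signed_count_def sum_product
  by (intro sum.cong refl) simp

lemma star_nonempty: "star c \<noteq> {}"
  by (simp add: star_def)

lemma star3_meets_iff:
  "star3 (cx, cy, cz) \<inter> C \<noteq> {} \<longleftrightarrow> (\<exists>s \<in> star cz. star cx \<times> star cy \<inter> slice C s \<noteq> {})"
  by (auto simp: star3_def slice_def)

lemma star3_subset_iff:
  "star3 (cx, cy, cz) \<subseteq> C \<longleftrightarrow> (\<forall>s \<in> star cz. star cx \<times> star cy \<subseteq> slice C s)"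
  by (auto simp: star3_def slice_def)

lemma sign_cell_dim: "(-1) ^ cell_dim (cx, cy, cz) = cell_sign cx * cell_sign cy * cell_sign cz"
  by (simp add: cell_dim_def cell_sign_def power_add)

text \<open>Group the vertical cells in pairs: the interval \<open>(t, t + 1)\<close>, whose star is layer \<open>t\<close>,
  and the point \<open>t\<close>, whose star consists of the layers \<open>t - 1\<close> and \<open>t\<close>; inclusion-exclusion
  for the point leaves the four terms below.\<close>

lemma boundary_euler_layers:
  assumes "C \<subseteq> {lo<..<hi} \<times> {lo<..<hi} \<times> {lo<..<hi}"
  shows "boundary_euler C = (\<Sum>t \<in> {lo..hi}.
      signed_count2 lo hi (\<lambda>cx cy. star cx \<times> star cy \<inter> slice C (t - 1) \<noteq> {})
    + signed_count2 lo hi (\<lambda>cx cy. star cx \<times> star cy \<subseteq> slice C t)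
    - signed_count2 lo hi (\<lambda>cx cy. star cx \<times> star cy \<inter> slice C (t - 1) \<noteq> {}
                                  \<and> star cx \<times> star cy \<inter> slice C t \<noteq> {})
    - signed_count2 lo hi (\<lambda>cx cy. star cx \<times> star cy \<subseteq> slice C (t - 1)
                                  \<and> star cx \<times> star cy \<subseteq> slice C t))"
  (is "_ = ?rhs")
proof -
  define F :: "cell3 \<Rightarrow> int" where
    "F = (\<lambda>c. (-1) ^ cell_dim c * (of_bool (star3 c \<inter> C \<noteq> {}) - of_bool (star3 c \<subseteq> C)))"
  have "boundary_euler C = (\<Sum>c \<in> cells lo hi \<times> cells lo hi \<times> cells lo hi. F c)"
    unfolding F_def by (rule boundary_euler_signed_sum[OF assms])
  also have "\<dots> = (\<Sum>cx \<in> cells lo hi. \<Sum>cy \<in> cells lo hi. \<Sum>cz \<in> cells lo hi. F (cx, cy, cz))"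
    by (simp add: sum.cartesian_product)
  also have "\<dots> = (\<Sum>cx \<in> cells lo hi. \<Sum>cy \<in> cells lo hi. \<Sum>t \<in> {lo..hi}.
                    F (cx, cy, (True, t)) + F (cx, cy, (False, t)))"
    by (simp only: sum_cells sum.distrib)
  also have "\<dots> = (\<Sum>t \<in> {lo..hi}. \<Sum>cx \<in> cells lo hi. \<Sum>cy \<in> cells lo hi.
                    F (cx, cy, (True, t)) + F (cx, cy, (False, t)))"
    by (simp only: sum.swap[of _ "{lo..hi}"])
  also have "\<dots> = ?rhs"
  proof (rule sum.cong[OF refl])
    fix t
    let ?M = "\<lambda>s cx cy. star cx \<times> star cy \<inter> slice C s \<noteq> {}"
    let ?I = "\<lambda>s cx cy. star cx \<times> star cy \<subseteq> slice C s"
    have pointwise: "F (cx, cy, (True, t)) + F (cx, cy, (False, t))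
      = cell_sign cx * cell_sign cy * of_bool (?M (t - 1) cx cy)
        + cell_sign cx * cell_sign cy * of_bool (?I t cx cy)
        - cell_sign cx * cell_sign cy * of_bool (?M (t - 1) cx cy \<and> ?M t cx cy)
        - cell_sign cx * cell_sign cy * of_bool (?I (t - 1) cx cy \<and> ?I t cx cy)" for cx cy
      unfolding F_def sign_cell_dim star3_meets_iff star3_subset_iff
      by (cases "?M (t - 1) cx cy"; cases "?M t cx cy"; cases "?I (t - 1) cx cy"; cases "?I t cx cy")
         (simp_all add: star_def cell_sign_def)
    show "(\<Sum>cx \<in> cells lo hi. \<Sum>cy \<in> cells lo hi. F (cx, cy, (True, t)) + F (cx, cy, (False, t)))
      = signed_count2 lo hi (?M (t - 1)) + signed_count2 lo hi (?I t)
        - signed_count2 lo hi (\<lambda>cx cy. ?M (t - 1) cx cy \<and> ?M t cx cy)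
        - signed_count2 lo hi (\<lambda>cx cy. ?I (t - 1) cx cy \<and> ?I t cx cy)"
      unfolding pointwise signed_count2_def by (simp add: sum.distrib sum_subtractf)
  qed
  finally show ?thesis .
qed

lemma signed_count2_meets_Times:
  assumes "X \<subseteq> {lo<..<hi}" and "Y \<subseteq> {lo<..<hi}"
  shows "signed_count2 lo hi (\<lambda>cx cy. star cx \<times> star cy \<inter> X \<times> Y \<noteq> {}) = int (runs X) * int (runs Y)"
proof -
  have "star cx \<times> star cy \<inter> X \<times> Y \<noteq> {} \<longleftrightarrow> star cx \<inter> X \<noteq> {} \<and> star cy \<inter> Y \<noteq> {}" for cx cy
    by (simp add: Times_Int_Times)
  then show ?thesis
    by (simp add: signed_count2_times signed_count_meets assms)
qed

lemma signed_count2_subset_Times: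
  assumes "X \<subseteq> {lo<..<hi}" and "Y \<subseteq> {lo<..<hi}"
  shows "signed_count2 lo hi (\<lambda>cx cy. star cx \<times> star cy \<subseteq> X \<times> Y) = int (runs X) * int (runs Y)"
proof -
  have "star cx \<times> star cy \<subseteq> X \<times> Y \<longleftrightarrow> star cx \<subseteq> X \<and> star cy \<subseteq> Y" for cx cy
    using star_nonempty by (simp add: times_subset_iff)
  then show ?thesis
    by (simp add: signed_count2_times signed_count_inside assms)
qed

text \<open>Nestedness of consecutive factors makes the star of a square meet both layers exactly
  when it meets their intersection.\<close>

lemma boundary_euler_product_layers:
  assumes box: "C \<subseteq> {lo<..<hi} \<times> {lo<..<hi} \<times> {lo<..<hi}"
    and slices: "\<And>t. slice C t = X t \<times> Y t"
    and bounded: "\<And>t. X t \<subseteq> {lo<..<hi}" "\<And>t. Y t \<subseteq> {lo<..<hi}"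
    and nested: "\<And>t. X (t - 1) \<subseteq> X t \<or> X t \<subseteq> X (t - 1)" "\<And>t. Y (t - 1) \<subseteq> Y t \<or> Y t \<subseteq> Y (t - 1)"
  shows "boundary_euler C = (\<Sum>t \<in> {lo..hi}.
      int (runs (X (t - 1))) * int (runs (Y (t - 1))) + int (runs (X t)) * int (runs (Y t))
      - 2 * (int (runs (X (t - 1) \<inter> X t)) * int (runs (Y (t - 1) \<inter> Y t))))"
  unfolding boundary_euler_layers[OF box] slices
proof (rule sum.cong[OF refl])
  fix t
  let ?X = "X (t - 1) \<inter> X t" and ?Y = "Y (t - 1) \<inter> Y t"
  have "?X \<subseteq> {lo<..<hi}" "?Y \<subseteq> {lo<..<hi}" using bounded by blast+
  moreover have "(star cx \<times> star cy \<inter> X (t - 1) \<times> Y (t - 1) \<noteq> {} \<and> star cx \<times> star cy \<inter> X t \<times> Y t \<noteq> {})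
      \<longleftrightarrow> star cx \<times> star cy \<inter> ?X \<times> ?Y \<noteq> {}" for cx cy
    using nested[of t] by (auto simp: Times_Int_Times)
  moreover have "(star cx \<times> star cy \<subseteq> X (t - 1) \<times> Y (t - 1) \<and> star cx \<times> star cy \<subseteq> X t \<times> Y t)
      \<longleftrightarrow> star cx \<times> star cy \<subseteq> ?X \<times> ?Y" for cx cy
    by blast
  ultimately show "signed_count2 lo hi (\<lambda>cx cy. star cx \<times> star cy \<inter> X (t - 1) \<times> Y (t - 1) \<noteq> {})
      + signed_count2 lo hi (\<lambda>cx cy. star cx \<times> star cy \<subseteq> X t \<times> Y t)
      - signed_count2 lo hi (\<lambda>cx cy. star cx \<times> star cy \<inter> X (t - 1) \<times> Y (t - 1) \<noteq> {}
          \<and> star cx \<times> star cy \<inter> X t \<times> Y t \<noteq> {})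
      - signed_count2 lo hi (\<lambda>cx cy. star cx \<times> star cy \<subseteq> X (t - 1) \<times> Y (t - 1)
          \<and> star cx \<times> star cy \<subseteq> X t \<times> Y t)
    = int (runs (X (t - 1))) * int (runs (Y (t - 1))) + int (runs (X t)) * int (runs (Y t))
      - 2 * (int (runs ?X) * int (runs ?Y))"
    by (simp add: signed_count2_meets_Times signed_count2_subset_Times bounded)
qed

section \<open>The boundary of a configuration\<close>

definition level_coords :: "config \<Rightarrow> nat \<Rightarrow> int set" where
  "level_coords Q i = (\<lambda>j. int j - 1) ` (Q ! i)"

definition level_runs :: "config \<Rightarrow> nat \<Rightarrow> nat" where
  "level_runs Q i = runs (level_coords Q i)"

definition level_at :: "config \<Rightarrow> int \<Rightarrow> int set" where
  "level_at Q t = (if 0 \<le> t \<and> t < int (length Q) then level_coords Q (nat t) else {})"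

text \<open>\<open>layer_factor n Q True t\<close> and \<open>layer_factor n Q False t\<close> are the projections of layer \<open>t\<close>
  to the \<open>x\<close>- and \<open>y\<close>-axis; the one along the blocks of the level is full.\<close>

definition layer_factor :: "nat \<Rightarrow> config \<Rightarrow> bool \<Rightarrow> int \<Rightarrow> int set" where
  "layer_factor n Q p t =
     (if 0 \<le> t \<and> t < int (length Q) \<and> even t = p then {0..<int n} else level_at Q t)"

lemma level_coords_subset: "Q ! i \<subseteq> {1..n} \<Longrightarrow> level_coords Q i \<subseteq> {0..<int n}"
  unfolding level_coords_def by force

lemma level_coords_full: "Q ! i = {1..n} \<Longrightarrow> level_coords Q i = {0..<int n}"
proof
  assume full: "Q ! i = {1..n}"
  then show "level_coords Q i \<subseteq> {0..<int n}" by (rule level_coords_subset[OF equalityD1])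
  show "{0..<int n} \<subseteq> level_coords Q i"
  proof
    fix x assume "x \<in> {0..<int n}"
    then have "nat (x + 1) \<in> Q ! i" "x = int (nat (x + 1)) - 1" using full by auto
    then show "x \<in> level_coords Q i" unfolding level_coords_def by blast
  qed
qed

lemma card_level_coords: "card (level_coords Q i) = card (Q ! i)"
  unfolding level_coords_def by (rule card_image) (simp add: inj_on_def)

lemma level_at_subset:
  assumes "\<forall>L \<in> set Q. L \<subseteq> {1..n}"
  shows "level_at Q t \<subseteq> {0..<int n}"
  using assms level_coords_subset[of Q "nat t" n]
  by (auto simp: level_at_def nat_less_iff)

lemma layer_factor_subset:
  assumes "\<forall>L \<in> set Q. L \<subseteq> {1..n}"
  shows "layer_factor n Q p t \<subseteq> {0..<int n}"
  using level_at_subset[OF assms] by (simp add: layer_factor_def)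

lemma layer_factor_outside: "\<not> (0 \<le> t \<and> t < int (length Q)) \<Longrightarrow> layer_factor n Q p t = {}"
  by (auto simp: layer_factor_def level_at_def)

lemma layer_factor_nested:
  assumes "\<forall>L \<in> set Q. L \<subseteq> {1..n}"
  shows "layer_factor n Q p (t - 1) \<subseteq> layer_factor n Q p t \<or> layer_factor n Q p t \<subseteq> layer_factor n Q p (t - 1)"
proof -
  let ?F = "layer_factor n Q p"
  have "?F (t - 1) = {0..<int n} \<or> ?F t = {0..<int n} \<or> ?F (t - 1) = {} \<or> ?F t = {}"
    by (auto simp: layer_factor_def level_at_def)
  then show ?thesis using layer_factor_subset[OF assms, of p] by blast
qed

lemma mem_config_cubes_iff:
  "(x, y, t) \<in> config_cubes n Q \<longleftrightarrow> (x, y) \<in> layer_factor n Q True t \<times> layer_factor n Q False t"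
proof (cases "0 \<le> t \<and> t < int (length Q)")
  case True
  then obtain i where t: "t = int i" and i: "i < length Q" by (metis nat_0_le nat_less_iff)
  show ?thesis
  proof
    assume "(x, y, t) \<in> config_cubes n Q"
    with t i show "(x, y) \<in> layer_factor n Q True t \<times> layer_factor n Q False t"
      by (auto simp: config_cubes_def layer_factor_def level_at_def level_coords_def)
  next
    assume xy: "(x, y) \<in> layer_factor n Q True t \<times> layer_factor n Q False t"
    show "(x, y, t) \<in> config_cubes n Q"
    proof (cases "even i")
      case True
      with xy t i obtain j where "j \<in> Q ! i" "y = int j - 1" "0 \<le> x" "x < int n"
        by (auto simp: layer_factor_def level_at_def level_coords_def)
      with t i True show ?thesis
        unfolding config_cubes_def by (intro UnI1 CollectI exI[of _ i] exI[of _ j] exI[of _ "nat x"]) simp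
    next
      case False
      with xy t i obtain j where "j \<in> Q ! i" "x = int j - 1" "0 \<le> y" "y < int n"
        by (auto simp: layer_factor_def level_at_def level_coords_def)
      with t i False show ?thesis
        unfolding config_cubes_def by (intro UnI2 CollectI exI[of _ i] exI[of _ j] exI[of _ "nat y"]) simp
    qed
  qed
next
  case False
  then show ?thesis by (auto simp: config_cubes_def layer_factor_def level_at_def)
qed

lemma slice_config_cubes: "slice (config_cubes n Q) t = layer_factor n Q True t \<times> layer_factor n Q False t"
  unfolding slice_def using mem_config_cubes_iff by blast

lemma runs_layer_factors:
  assumes "0 < n"
  shows "int (runs (layer_factor n Q True t)) * int (runs (layer_factor n Q False t)) = int (runs (level_at Q t))"
  using runs_atLeastLessThan[OF assms] by (simp add: layer_factor_def level_at_def)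

lemma runs_layer_factor_overlaps:
  assumes "0 < n" and "\<forall>L \<in> set Q. L \<subseteq> {1..n}"
  shows "int (runs (layer_factor n Q True (t - 1) \<inter> layer_factor n Q True t))
       * int (runs (layer_factor n Q False (t - 1) \<inter> layer_factor n Q False t))
       = int (runs (level_at Q (t - 1))) * int (runs (level_at Q t))"
proof (cases "0 \<le> t - 1 \<and> t < int (length Q)")
  case True
  have "level_at Q (t - 1) \<subseteq> {0..<int n}" "level_at Q t \<subseteq> {0..<int n}"
    using level_at_subset[OF assms(2)] by blast+
  moreover have "odd (t - 1) \<longleftrightarrow> even t" by simp
  ultimately show ?thesis
    using True by (cases "even t") (auto simp: layer_factor_def Int_absorb1 Int_absorb2 mult.commute)
next
  case False
  then have "level_at Q (t - 1) = {} \<or> level_at Q t = {}" by (auto simp: level_at_def)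
  with False show ?thesis by (auto simp: layer_factor_def level_at_def)
qed

lemma sum_int_interval_eq_sum_lessThan:
  fixes f :: "int \<Rightarrow> 'a::comm_monoid_add"
  assumes "\<And>t. f t \<noteq> 0 \<Longrightarrow> a \<le> t \<and> t < a + int m" and "lo \<le> a" and "a + int m \<le> hi + 1"
  shows "(\<Sum>t \<in> {lo..hi}. f t) = (\<Sum>i < m. f (a + int i))"
proof -
  have "(\<Sum>t \<in> {lo..hi}. f t) = (\<Sum>t \<in> (\<lambda>i. a + int i) ` {..<m}. f t)"
  proof (rule sum.mono_neutral_right)
    show "\<forall>t \<in> {lo..hi} - (\<lambda>i. a + int i) ` {..<m}. f t = 0"
    proof (rule ballI, rule ccontr)
      fix t assume t: "t \<in> {lo..hi} - (\<lambda>i. a + int i) ` {..<m}" and "f t \<noteq> 0"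
      then have "a \<le> t" "t < a + int m" using assms(1) by blast+
      then have "t = a + int (nat (t - a))" "nat (t - a) < m" by auto
      with t show False by blast
    qed
  qed (use assms(2,3) in auto)
  also have "\<dots> = (\<Sum>i < m. f (a + int i))"
    by (rule sum.reindex_cong[of "\<lambda>i. a + int i"]) (auto simp: inj_on_def)
  finally show ?thesis .
qed

lemma config_cubes_subset_box:
  assumes "\<forall>L \<in> set Q. L \<subseteq> {1..n}"
  defines "hi \<equiv> int n + int (length Q)"
  shows "config_cubes n Q \<subseteq> {-1<..<hi} \<times> {-1<..<hi} \<times> {-1<..<hi}"
proof
  fix c assume "c \<in> config_cubes n Q"
  moreover obtain x y t where c: "c = (x, y, t)" by (cases c)
  ultimately have xy: "(x, y) \<in> layer_factor n Q True t \<times> layer_factor n Q False t"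
    using mem_config_cubes_iff by blast
  then have "0 \<le> t" "t < int (length Q)"
    using layer_factor_outside by fastforce+
  moreover have "x \<in> {0..<int n}" "y \<in> {0..<int n}"
    using xy layer_factor_subset[OF assms(1)] by blast+
  ultimately show "c \<in> {-1<..<hi} \<times> {-1<..<hi} \<times> {-1<..<hi}"
    unfolding c hi_def by auto
qed

lemma boundary_euler_config_cubes_layers:
  assumes "0 < n" and "\<forall>L \<in> set Q. L \<subseteq> {1..n}"
  defines "hi \<equiv> int n + int (length Q)"
  shows "boundary_euler (config_cubes n Q) = (\<Sum>t \<in> {-1..hi}.
      int (runs (level_at Q (t - 1))) + int (runs (level_at Q t))
      - 2 * (int (runs (level_at Q (t - 1))) * int (runs (level_at Q t))))"
proof -
  have bounded: "layer_factor n Q p t \<subseteq> {-1<..<hi}" for p t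
    using layer_factor_subset[OF assms(2)] unfolding hi_def by fastforce
  show ?thesis
    unfolding boundary_euler_product_layers[OF config_cubes_subset_box[OF assms(2)] slice_config_cubes
        bounded[unfolded hi_def] bounded[unfolded hi_def]
        layer_factor_nested[OF assms(2)] layer_factor_nested[OF assms(2)]]
      runs_layer_factors[OF assms(1)] runs_layer_factor_overlaps[OF assms(1,2)] hi_def ..
qed

lemma boundary_euler_config_cubes:
  assumes "0 < n" and "\<forall>L \<in> set Q. L \<subseteq> {1..n}"
  shows "boundary_euler (config_cubes n Q) = 2 * (\<Sum>i < length Q. int (level_runs Q i))
           - 2 * (\<Sum>i < length Q - 1. int (level_runs Q i) * int (level_runs Q (i + 1)))"
proof -
  let ?m = "length Q" and ?hi = "int n + int (length Q)"
  define \<rho> where "\<rho> t = int (runs (level_at Q t))" for t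
  have \<rho>_nat: "\<rho> (int i) = int (level_runs Q i)" if "i < ?m" for i
    using that by (simp add: \<rho>_def level_at_def level_runs_def)
  have \<rho>_support: "\<rho> t \<noteq> 0 \<Longrightarrow> 0 \<le> t \<and> t < int ?m" for t
    by (auto simp: \<rho>_def level_at_def split: if_splits)
  have "boundary_euler (config_cubes n Q) = (\<Sum>t \<in> {-1..?hi}. \<rho> (t - 1) + \<rho> t - 2 * (\<rho> (t - 1) * \<rho> t))"
    unfolding boundary_euler_config_cubes_layers[OF assms] \<rho>_def ..
  also have "\<dots> = (\<Sum>t \<in> {-1..?hi}. \<rho> (t - 1)) + (\<Sum>t \<in> {-1..?hi}. \<rho> t)
      - 2 * (\<Sum>t \<in> {-1..?hi}. \<rho> (t - 1) * \<rho> t)"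
    by (simp add: sum.distrib sum_subtractf sum_distrib_left)
  also have "(\<Sum>t \<in> {-1..?hi}. \<rho> (t - 1)) = (\<Sum>i < ?m. \<rho> (int i))"
    using sum_int_interval_eq_sum_lessThan[of "\<lambda>t. \<rho> (t - 1)" 1 ?m "-1" ?hi] \<rho>_support by fastforce
  also have "(\<Sum>t \<in> {-1..?hi}. \<rho> t) = (\<Sum>i < ?m. \<rho> (int i))"
    using sum_int_interval_eq_sum_lessThan[of \<rho> 0 ?m "-1" ?hi] \<rho>_support by fastforce
  also have "(\<Sum>t \<in> {-1..?hi}. \<rho> (t - 1) * \<rho> t) = (\<Sum>i < ?m - 1. \<rho> (int i) * \<rho> (int (i + 1)))"
    using sum_int_interval_eq_sum_lessThan[of "\<lambda>t. \<rho> (t - 1) * \<rho> t" 1 "?m - 1" "-1" ?hi] \<rho>_support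
    by (fastforce simp: algebra_simps)
  also have "(\<Sum>i < ?m. \<rho> (int i)) = (\<Sum>i < ?m. int (level_runs Q i))"
    by (rule sum.cong) (simp_all add: \<rho>_nat)
  also have "(\<Sum>i < ?m - 1. \<rho> (int i) * \<rho> (int (i + 1)))
      = (\<Sum>i < ?m - 1. int (level_runs Q i) * int (level_runs Q (i + 1)))"
  proof (rule sum.cong)
    fix i assume "i \<in> {..<?m - 1}"
    then show "\<rho> (int i) * \<rho> (int (i + 1)) = int (level_runs Q i) * int (level_runs Q (i + 1))"
      using \<rho>_nat[of i] \<rho>_nat[of "i + 1"] by simp
  qed simp
  finally show ?thesis by simp
qed

lemma genus_eq_level_runs:
  assumes "0 < n" and "\<forall>L \<in> set Q. L \<subseteq> {1..n}"
  shows "genus n Q = 1 - (\<Sum>i < length Q. real (level_runs Q i))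
           + (\<Sum>i < length Q - 1. real (level_runs Q i) * real (level_runs Q (i + 1)))"
  unfolding genus_def boundary_euler_config_cubes[OF assms] by simp

section \<open>An invariant of the game\<close>

definition block_count :: "config \<Rightarrow> nat" where
  "block_count Q = (\<Sum>L \<leftarrow> Q. card L)"

text \<open>Blocks are never taken from the level below an incomplete top level, so that level stays
  full; and whatever the level below it lost, the top level has gained.\<close>

definition jenga_invariant :: "nat \<Rightarrow> nat \<Rightarrow> config \<Rightarrow> bool" where
  "jenga_invariant n k Q \<longleftrightarrow> (\<forall>L \<in> set Q. L \<subseteq> {1..n}) \<and> block_count Q = n * k \<and> k \<le> length Q
     \<and> Q ! (length Q - 2) = {1..n} \<and> n \<le> card (Q ! (length Q - 3)) + card (Q ! (length Q - 1))"

lemma block_count_eq_sum: "block_count Q = (\<Sum>i < length Q. card (Q ! i))"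
  unfolding block_count_def sum_list_sum_nth by (simp add: atLeast0LessThan)

lemma block_count_update:
  "i < length Q \<Longrightarrow> block_count (Q[i := X]) + card (Q ! i) = block_count Q + card X"
  unfolding block_count_def map_update
  using sum_list_update[of i "map card Q" "card X"] elem_le_sum_list[of i "map card Q"] by simp

lemma block_count_snoc: "block_count (Q @ [X]) = block_count Q + card X"
  by (simp add: block_count_def)

lemma butlast_snoc_eq_update: "xs \<noteq> [] \<Longrightarrow> butlast xs @ [x] = xs[length xs - 1 := x]"
  by (induction xs rule: rev_induct) auto

lemma jenga_moveE:
  assumes "jenga_move n Q Q'"
  obtains (fill_top) i j s where "i + 2 < length Q" "j \<in> Q ! i" "card (last Q) < n" "s \<in> {1..n} - last Q"
      "Q' = Q[i := Q ! i - {j}, length Q - 1 := insert s (last Q)]"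
    | (new_level) i j s where "i + 1 < length Q" "j \<in> Q ! i" "\<not> card (last Q) < n" "s \<in> {1..n}"
      "Q' = Q[i := Q ! i - {j}] @ [{s}]"
proof -
  from assms obtain i j where i: "i + 1 < length Q" "card (last Q) < n \<longrightarrow> i + 2 \<noteq> length Q"
    and j: "j \<in> Q ! i"
    and Q': "if card (last Q) < n
             then \<exists>s \<in> {1..n} - last Q. Q' = butlast (Q[i := Q ! i - {j}]) @ [insert s (last Q)]
             else \<exists>s \<in> {1..n}. Q' = Q[i := Q ! i - {j}] @ [{s}]"
    unfolding jenga_move_def Let_def by blast
  show thesis
  proof (cases "card (last Q) < n")
    case True
    with Q' obtain s where "s \<in> {1..n} - last Q" "Q' = butlast (Q[i := Q ! i - {j}]) @ [insert s (last Q)]"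
      by auto
    moreover have "Q[i := Q ! i - {j}] \<noteq> []" using i by auto
    ultimately show thesis
      using fill_top[of i j s] i j True by (simp add: butlast_snoc_eq_update)
  next
    case False
    with Q' i j show thesis using new_level by auto
  qed
qed

lemma jenga_invariant_initial: "3 \<le> k \<Longrightarrow> jenga_invariant n k (initial_config n k)"
  by (simp add: jenga_invariant_def initial_config_def block_count_def sum_list_replicate)

lemma jenga_invariant_level_subset:
  "jenga_invariant n k Q \<Longrightarrow> p < length Q \<Longrightarrow> Q ! p \<subseteq> {1..n}"
  unfolding jenga_invariant_def using nth_mem by blast

lemma card_remove_block:
  fixes L :: "nat set"
  assumes "j \<in> L" and "L \<subseteq> {1..n}"
  shows "card (L - {j}) + 1 = card L"
proof -
  have "finite L" using assms(2) by (rule finite_subset) simp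
  then show ?thesis unfolding Suc_eq_plus1[symmetric] by (rule card_Suc_Diff1[OF _ assms(1)])
qed

lemma levels_subset_update:
  "\<forall>L \<in> set Q. L \<subseteq> A \<Longrightarrow> X \<subseteq> A \<Longrightarrow> \<forall>L \<in> set (Q[i := X]). L \<subseteq> A"
  using set_update_subset_insert[of Q i X] by blast

lemma jenga_invariant_fill_top:
  assumes inv: "jenga_invariant n k Q" and k: "3 \<le> k"
    and i: "i + 2 < length Q" and j: "j \<in> Q ! i" and s: "s \<in> {1..n} - last Q"
  shows "jenga_invariant n k (Q[i := Q ! i - {j}, length Q - 1 := insert s (last Q)])"
    (is "jenga_invariant n k ?Q'")
proof -
  let ?m = "length Q" and ?R = "Q[i := Q ! i - {j}]"
  have m: "3 \<le> ?m" using inv k by (simp add: jenga_invariant_def)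
  have last: "last Q = Q ! (?m - 1)" using m by (intro last_conv_nth) auto
  have sub: "Q ! p \<subseteq> {1..n}" if "p < ?m" for p
    using jenga_invariant_level_subset[OF inv that] .
  have nth': "?Q' ! p = (if p = ?m - 1 then insert s (last Q) else if p = i then Q ! i - {j} else Q ! p)"
    if "p < ?m" for p
    using i that by auto
  have card_i: "card (Q ! i - {j}) + 1 = card (Q ! i)"
    using card_remove_block[OF j sub] i by simp
  have card_top: "card (insert s (last Q)) = card (last Q) + 1"
    using s sub[of "?m - 1"] finite_subset m last by fastforce
  have "block_count ?R + 1 = block_count Q"
    using block_count_update[of i Q "Q ! i - {j}"] card_i i by simp
  moreover have "block_count ?Q' + card (last Q) = block_count ?R + card (insert s (last Q))"
    using block_count_update[of "?m - 1" ?R] i m last by simp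
  ultimately have "block_count ?Q' = block_count Q" using card_top by simp
  moreover have "\<forall>L \<in> set ?Q'. L \<subseteq> {1..n}"
    using inv s sub[of "?m - 1"] sub[of i] i m last unfolding jenga_invariant_def
    by (intro levels_subset_update) auto
  moreover have "?Q' ! (?m - 2) = Q ! (?m - 2)" using nth' i m by simp
  moreover have "card (Q ! (?m - 3)) \<le> card (?Q' ! (?m - 3)) + 1"
    using nth'[of "?m - 3"] card_i m by auto
  moreover have "?Q' ! (?m - 1) = insert s (last Q)" using nth' m by simp
  ultimately show ?thesis
    using inv card_top last unfolding jenga_invariant_def by simp
qed

lemma jenga_invariant_new_level:
  assumes inv: "jenga_invariant n k Q" and k: "3 \<le> k"
    and i: "i + 1 < length Q" and j: "j \<in> Q ! i" and top_full: "\<not> card (last Q) < n"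
    and s: "s \<in> {1..n}"
  shows "jenga_invariant n k (Q[i := Q ! i - {j}] @ [{s}])"
    (is "jenga_invariant n k ?Q'")
proof -
  let ?m = "length Q"
  have m: "3 \<le> ?m" using inv k by (simp add: jenga_invariant_def)
  have last: "last Q = Q ! (?m - 1)" using m by (intro last_conv_nth) auto
  have sub: "Q ! p \<subseteq> {1..n}" if "p < ?m" for p
    using jenga_invariant_level_subset[OF inv that] .
  have nth': "?Q' ! p = (if p = ?m then {s} else if p = i then Q ! i - {j} else Q ! p)"
    if "p < ?m + 1" for p
    using i that by (auto simp: nth_append)
  have card_i: "card (Q ! i - {j}) + 1 = card (Q ! i)"
    using card_remove_block[OF j sub] i by simp
  have "card (last Q) = card {1..n}"
    using top_full card_mono[OF _ sub[of "?m - 1"]] m last by simp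
  then have "last Q = {1..n}"
    using card_subset_eq[OF _ sub[of "?m - 1"]] m last by simp
  moreover have "?Q' ! (?m - 1) = last Q" using i m last by (auto simp: nth_append)
  ultimately have "?Q' ! (?m - 1) = {1..n}" by simp
  moreover have "block_count ?Q' = block_count Q"
    using block_count_update[of i Q "Q ! i - {j}"] block_count_snoc card_i i by simp
  moreover have "\<forall>L \<in> set ?Q'. L \<subseteq> {1..n}"
  proof -
    have "\<forall>L \<in> set (Q[i := Q ! i - {j}]). L \<subseteq> {1..n}"
      using inv sub[of i] i unfolding jenga_invariant_def by (intro levels_subset_update) auto
    then show ?thesis using s by simp
  qed
  moreover have "card (Q ! (?m - 2)) \<le> card (?Q' ! (?m - 2)) + 1"
    using nth'[of "?m - 2"] card_i m by auto
  moreover have "?Q' ! ?m = {s}" using nth' by simp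
  ultimately show ?thesis
    using inv unfolding jenga_invariant_def by (simp add: numeral_eq_Suc)
qed

lemma jenga_invariant_step:
  assumes "jenga_invariant n k Q" and "jenga_move n Q Q'" and "3 \<le> k"
  shows "jenga_invariant n k Q'"
  using assms(2)
proof (cases rule: jenga_moveE)
  case (fill_top i j s)
  then show ?thesis using jenga_invariant_fill_top[OF assms(1,3)] by simp
next
  case (new_level i j s)
  then show ?thesis using jenga_invariant_new_level[OF assms(1,3)] by simp
qed

lemma jenga_invariant_reachable:
  assumes "(jenga_move n)\<^sup>*\<^sup>* (initial_config n k) Q" and "3 \<le> k"
  shows "jenga_invariant n k Q"
  using assms(1)
proof (induction rule: rtranclp_induct)
  case base
  show ?case using jenga_invariant_initial[OF assms(2)] .
next
  case (step Q Q')
  then show ?case using jenga_invariant_step assms(2) by blast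
qed

section \<open>The bound\<close>

lemma level_runs_le_card: "Q ! i \<subseteq> {1..n} \<Longrightarrow> level_runs Q i \<le> card (Q ! i)"
  using runs_le_card[of "level_coords Q i"] finite_subset[OF level_coords_subset]
  by (simp add: level_runs_def card_level_coords)

lemma level_runs_bound: "Q ! i \<subseteq> {1..n} \<Longrightarrow> 2 * level_runs Q i \<le> n + 1"
  unfolding level_runs_def by (rule runs_bound[OF level_coords_subset])

lemma level_runs_full: "Q ! i = {1..n} \<Longrightarrow> 0 < n \<Longrightarrow> level_runs Q i = 1"
  by (simp add: level_runs_def level_coords_full runs_atLeastLessThan)

lemma genus_sum_telescope:
  fixes r :: "nat \<Rightarrow> real"
  assumes "r (M + 1) = 1"
  shows "1 - (\<Sum>i < M + 3. r i) + (\<Sum>i < M + 2. r i * r (i + 1)) = (\<Sum>i < M. r i * (r (i + 1) - 1))"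
proof -
  have "(\<Sum>i < M + 3. r i) = (\<Sum>i < M. r i) + r M + r (M + 1) + r (M + 2)"
    by (simp add: numeral_3_eq_3)
  moreover have "(\<Sum>i < M + 2. r i * r (i + 1)) = (\<Sum>i < M. r i * r (i + 1)) + r M * r (M + 1) + r (M + 1) * r (M + 2)"
    by (simp add: numeral_2_eq_2)
  ultimately show ?thesis
    using assms by (simp add: sum_subtractf algebra_simps)
qed

lemma runs_term_le:
  fixes x y b n :: real
  assumes "0 \<le> x" "x \<le> b" "0 \<le> y" "2 * y \<le> n + 1" "1 \<le> n"
  shows "x * (y - 1) \<le> b * (n - 1) / 2"
proof (cases "1 \<le> y")
  case True
  then have "x * (y - 1) \<le> b * ((n - 1) / 2)"
    using assms by (intro mult_mono) auto
  then show ?thesis by simp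
next
  case False
  then have "x * (y - 1) \<le> 0" using assms(1) by (simp add: mult_nonneg_nonpos)
  also have "0 \<le> b * (n - 1) / 2" using assms by simp
  finally show ?thesis .
qed

text \<open>The top three levels contribute nothing, and the level above any other level has at most
  \<open>(n + 1) / 2\<close> runs.\<close>

lemma genus_sum_le:
  fixes r b :: "nat \<Rightarrow> real" and n k :: real
  assumes bounds: "\<And>i. i < M + 3 \<Longrightarrow> 0 \<le> r i \<and> r i \<le> b i \<and> 2 * r i \<le> n + 1"
    and "r (M + 1) = 1" and "(\<Sum>i < M + 3. b i) = n * k" and "b (M + 1) = n"
    and "n \<le> b M + b (M + 2)" and "1 \<le> n"
  shows "1 - (\<Sum>i < M + 3. r i) + (\<Sum>i < M + 2. r i * r (i + 1)) \<le> n * (n - 1) * (k - 2) / 2"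
proof -
  have "1 - (\<Sum>i < M + 3. r i) + (\<Sum>i < M + 2. r i * r (i + 1)) = (\<Sum>i < M. r i * (r (i + 1) - 1))"
    using genus_sum_telescope assms(2) .
  also have "\<dots> \<le> (\<Sum>i < M. b i * (n - 1) / 2)"
    using bounds assms(6) by (intro sum_mono runs_term_le) auto
  also have "\<dots> = (n - 1) / 2 * (\<Sum>i < M. b i)"
    by (simp add: sum_distrib_left sum_divide_distrib algebra_simps)
  also have "\<dots> \<le> (n - 1) / 2 * (n * (k - 2))"
  proof (rule mult_left_mono)
    have "(\<Sum>i < M + 3. b i) = (\<Sum>i < M. b i) + b M + b (M + 1) + b (M + 2)"
      by (simp add: numeral_3_eq_3)
    then show "(\<Sum>i < M. b i) \<le> n * (k - 2)"
      using assms(3-5) by (simp add: algebra_simps)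
  qed (use assms(6) in simp)
  also have "\<dots> = n * (n - 1) * (k - 2) / 2"
    by (simp add: field_simps)
  finally show ?thesis .
qed

lemma genus_le_of_jenga_invariant:
  assumes inv: "jenga_invariant n k Q" and n: "1 \<le> n" and k: "3 \<le> k"
  shows "genus n Q \<le> real n * (real n - 1) * (real k - 2) / 2"
proof -
  have levels: "\<forall>L \<in> set Q. L \<subseteq> {1..n}" and count: "block_count Q = n * k"
    and full: "Q ! (length Q - 2) = {1..n}" and low: "n \<le> card (Q ! (length Q - 3)) + card (Q ! (length Q - 1))"
    and "k \<le> length Q"
    using inv unfolding jenga_invariant_def by auto
  define M where "M = length Q - 3"
  have m: "length Q = M + 3" using k \<open>k \<le> length Q\<close> by (simp add: M_def)
  have sub: "Q ! i \<subseteq> {1..n}" if "i < M + 3" for i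
    using jenga_invariant_level_subset[OF inv] that m by simp
  have "genus n Q = 1 - (\<Sum>i < M + 3. real (level_runs Q i))
      + (\<Sum>i < M + 2. real (level_runs Q i) * real (level_runs Q (i + 1)))"
    using genus_eq_level_runs[OF _ levels] n m by simp
  also have "\<dots> \<le> real n * (real n - 1) * (real k - 2) / 2"
  proof (rule genus_sum_le[where b = "\<lambda>i. real (card (Q ! i))"])
    show "0 \<le> real (level_runs Q i) \<and> real (level_runs Q i) \<le> real (card (Q ! i))
        \<and> 2 * real (level_runs Q i) \<le> real n + 1" if "i < M + 3" for i
    proof -
      have "real (level_runs Q i) \<le> real (card (Q ! i))" "real (2 * level_runs Q i) \<le> real (n + 1)"
        using level_runs_le_card[OF sub] level_runs_bound[OF sub] that by (simp_all only: of_nat_le_iff)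
      then show ?thesis by simp
    qed
    show "real (level_runs Q (M + 1)) = 1"
      using level_runs_full[of Q "M + 1" n] full m n by simp
    show "(\<Sum>i < M + 3. real (card (Q ! i))) = real n * real k"
    proof -
      have "(\<Sum>i < M + 3. card (Q ! i)) = n * k" using count m by (simp add: block_count_eq_sum)
      then show ?thesis by (simp only: of_nat_sum[symmetric] of_nat_mult)
    qed
    show "real (card (Q ! (M + 1))) = real n" using full m by simp
    show "real n \<le> real (card (Q ! M)) + real (card (Q ! (M + 2)))" using low m by simp
  qed (use n in simp)
  finally show ?thesis .
qed

theorem mainTheorem6:
  fixes n k :: nat and Q :: config
  assumes "odd n" and "n \<ge> 3" and "k \<ge> 3"
    and "jenga_like n k Q"
  shows "genus n Q \<le> real (n * (n - 1) * (k - 2)) / 2"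
proof -
  have "jenga_invariant n k Q"
    using assms(3,4) jenga_invariant_reachable unfolding jenga_like_def by blast
  then have "genus n Q \<le> real n * (real n - 1) * (real k - 2) / 2"
    using genus_le_of_jenga_invariant assms(2,3) by simp
  then show ?thesis using assms(2,3) by (simp add: of_nat_diff)
qed

end
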